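(* Let $m\ge1$, $n=2m$, $\alpha$ a primitive element of $\mathbb{F}_{2^n}$, $\beta=\alpha^{2^m+1}$, $\xi=\alpha^{2^m-1}$, $U=\langle\xi\rangle$, $\Gamma=\{\beta,\ldots,\beta^{2^{m-1}-1}\}$, and let $F:\mathbb{F}_{2^n}\to\mathbb{F}_2$ be the Boolean function with $\mathrm{Supp}(F)=\{yz:y\in\Gamma,z\in U\}\cup\{1,\xi,\ldots,\xi^{2^{m-1}}\}$. Then the nonlinearity of $F$ satisfies $$\mathcal{N}_F>2^{n-1}-\Big(\frac{\ln 2}{\pi}\,m+0.92\Big)2^m-1.$$
   Context: The nonlinearity of $F:\mathbb{F}_{2^n}\to\mathbb{F}_2$ is $\mathcal{N}_F=\min_{a}\,|\{x:F(x)\neq a(x)\}|$ over all affine Boolean functions $a$ (degree $\le1$); equivalently $\mathcal{N}_F=2^{n-1}-\frac12\max_{\lambda\in\mathbb{F}_{2^n}}|W_F(\lambda)|$, where $W_F(\lambda)=\sum_{x\in\mathbb{F}_{2^n}}(-1)^{F(x)+\mathrm{tr}_1^n(\lambda x)}$ and $\mathrm{tr}_1^n(x)=\sum_{i=0}^{n-1}x^{2^i}$. *)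

theory Defs
  imports Complex_Main "HOL-Library.Cardinality"
begin

definition primitive_element :: "'a::{field,finite} \<Rightarrow> bool" where
  "primitive_element \<alpha> \<longleftrightarrow> (\<forall>x. x \<noteq> 0 \<longrightarrow> (\<exists>k::nat. x = \<alpha> ^ k))"

text \<open>Boolean functions are modelled as predicates (True = 1, False = 0).
  A Boolean function is affine (algebraic degree at most 1 over F_2) iff
  a(x+y) = a(x) + a(y) + a(0) in F_2 for all x, y.\<close>
definition affine_bool :: "('a::ab_group_add \<Rightarrow> bool) \<Rightarrow> bool" where
  "affine_bool a \<longleftrightarrow> (\<forall>x y. a (x + y) = (a x \<noteq> (a y \<noteq> a 0)))"

definition nonlinearity :: "('a::{ab_group_add,finite} \<Rightarrow> bool) \<Rightarrow> nat" where
  "nonlinearity F = Min {card {x. F x \<noteq> a x} | a. affine_bool a}"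

end

theory Submission
  imports Defs "HOL-Analysis.Complex_Transcendental"
begin

text \<open>
  Put \<open>N = 2^m - 1\<close>. On a nonzero element \<open>\<alpha>^j\<close>, the indicator of \<open>\<Gamma>U\<close> plus half the
  indicator of \<open>U\<close> depends only on \<open>j mod N\<close>: it is \<open>1/2\<close> at \<open>0\<close>, \<open>1\<close> at the other even
  residues and \<open>0\<close> at the odd ones. Expanding this weight in the characters of \<open>\<int>/N\<close> turns its
  Walsh coefficients into a combination of Gauss sums of modulus \<open>2^m\<close>. At an \<open>N\<close>-th root of
  unity \<open>\<zeta> \<noteq> 1\<close> the Fourier coefficient of the weight is \<open>(1 - \<zeta>)/(2(1 + \<zeta>))\<close>, and
  \<open>cot y \<le> 1/y\<close> bounds the \<open>k\<close>-th one by \<open>N/(\<pi>|N - 2k|)\<close>; summed over \<open>k\<close> this is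
  \<open>(2N/\<pi>)(1 + 1/3 + \<dots> + 1/(2L - 1))\<close> with \<open>L = 2^(m-1) - 1\<close>, roughly \<open>N m ln 2 / \<pi>\<close>.
  The rest of \<open>F\<close>, the indicator of \<open>{1, \<xi>, \<dots>, \<xi>^(2^(m-1))}\<close> minus half the indicator
  of \<open>U\<close>, lives on \<open>U\<close>, which has \<open>2^m + 1\<close> elements.
\<close>

section \<open>Elementary estimates\<close>

lemma ln_ge_two_mult_diff_div_add:
  assumes "1 \<le> x"
  shows "2 * (x - 1) / (x + 1) \<le> ln (x::real)"
proof -
  let ?f = "\<lambda>x::real. ln x - 2 * (x - 1) / (x + 1)"
  have "?f 1 \<le> ?f x"
  proof (rule DERIV_nonneg_imp_nondecreasing[OF assms])
    fix t :: real assume t: "1 \<le> t" "t \<le> x"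
    have "(?f has_real_derivative (1/t - 4/(t+1)^2)) (at t)"
      using t by (auto intro!: derivative_eq_intros simp: field_simps power2_eq_square)
    moreover have "1/t - 4/(t+1)^2 = (t-1)^2 / (t*(t+1)^2)"
      using t unfolding power2_eq_square by (simp add: divide_simps) (simp add: algebra_simps)
    ultimately show "\<exists>y. (?f has_real_derivative y) (at t) \<and> 0 \<le> y"
      using t by auto
  qed
  then show ?thesis by simp
qed

lemma ln_2_gt: "ln (2::real) > 0.685"
proof -
  have "ln (2::real) = ln (4/3) + ln (3/2)"
    using ln_mult[of "4/3::real" "3/2"] by simp
  then show ?thesis
    using ln_ge_two_mult_diff_div_add[of "4/3"] ln_ge_two_mult_diff_div_add[of "3/2"] by simp
qed

lemma mult_cos_le_sin:
  assumes "0 \<le> y" "y \<le> pi"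
  shows "y * cos y \<le> sin y"
proof -
  let ?f = "\<lambda>y. sin y - y * cos y"
  have "?f 0 \<le> ?f y"
  proof (rule DERIV_nonneg_imp_nondecreasing[OF assms(1)])
    fix t :: real assume t: "0 \<le> t" "t \<le> y"
    have "(?f has_real_derivative (t * sin t)) (at t)"
      by (auto intro!: derivative_eq_intros simp: field_simps)
    moreover have "0 \<le> t * sin t"
      using t assms by (intro mult_nonneg_nonneg sin_ge_zero) auto
    ultimately show "\<exists>d. (?f has_real_derivative d) (at t) \<and> 0 \<le> d" by blast
  qed
  then show ?thesis by simp
qed

lemma abs_sin_div_abs_cos_le:
  assumes "0 < t" "t < pi" "t \<noteq> pi / 2"
  shows "\<bar>sin t\<bar> / \<bar>cos t\<bar> \<le> 1 / \<bar>pi / 2 - t\<bar>"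
proof -
  define y where "y = \<bar>pi / 2 - t\<bar>"
  have y: "0 < y" "y < pi / 2"
    using assms by (auto simp: y_def split: abs_split)
  have sin_y: "sin y > 0"
    using y by (intro sin_gt_zero) auto
  have "\<bar>sin t\<bar> = cos y"
    using sin_gt_zero[OF assms(1,2)] by (simp add: y_def sin_cos_eq)
  moreover have "\<bar>cos t\<bar> = sin y"
  proof -
    have "sin y = cos t \<or> sin y = - cos t"
      by (simp add: y_def abs_if sin_diff)
    then show ?thesis
      using sin_y by auto
  qed
  ultimately show ?thesis
    using mult_cos_le_sin[of y] y sin_y by (simp add: y_def field_simps)
qed

definition odd_harmonic :: "nat \<Rightarrow> real" where
  "odd_harmonic L = (\<Sum>j=1..L. 1 / (2 * real j - 1))"

lemma odd_harmonic_le: "1 \<le> L \<Longrightarrow> odd_harmonic L \<le> 1 + ln (real L) / 2"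
proof (induction L rule: dec_induct)
  case base
  then show ?case by (simp add: odd_harmonic_def)
next
  case (step L)
  have "odd_harmonic (Suc L) = odd_harmonic L + 1 / (2 * real L + 1)"
    by (simp add: odd_harmonic_def)
  moreover have "2 / (2 * real L + 1) \<le> ln ((real L + 1) / real L)"
    using ln_ge_two_mult_diff_div_add[of "(real L + 1) / real L"] step
    by (simp add: field_simps)
  moreover have "ln ((real L + 1) / real L) = ln (real (Suc L)) - ln (real L)"
    using step by (simp add: ln_div)
  ultimately show ?case
    using step by simp
qed

lemma sum_inverse_abs_odd_minus_even:
  "(\<Sum>k=1..2*L. 1 / \<bar>real (2*L + 1) - 2 * real k\<bar>) = 2 * odd_harmonic L"
proof -
  have "{1..2*L} = {1..L} \<union> {L+1..2*L}" by auto
  then have "(\<Sum>k=1..2*L. 1 / \<bar>real (2*L + 1) - 2 * real k\<bar>) =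
      (\<Sum>k=1..L. 1 / \<bar>real (2*L + 1) - 2 * real k\<bar>) + (\<Sum>k=L+1..2*L. 1 / \<bar>real (2*L + 1) - 2 * real k\<bar>)"
    by (simp add: sum.union_disjoint)
  also have "(\<Sum>k=1..L. 1 / \<bar>real (2*L + 1) - 2 * real k\<bar>) = odd_harmonic L"
    unfolding odd_harmonic_def
    by (rule sum.reindex_bij_witness[where i="\<lambda>j. L + 1 - j" and j="\<lambda>k. L + 1 - k"]) (auto simp: of_nat_diff)
  also have "(\<Sum>k=L+1..2*L. 1 / \<bar>real (2*L + 1) - 2 * real k\<bar>) = odd_harmonic L"
    unfolding odd_harmonic_def
    by (rule sum.reindex_bij_witness[where i="\<lambda>j. L + j" and j="\<lambda>k. k - L"]) (auto simp: of_nat_diff)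
  finally show ?thesis by simp
qed

section \<open>Characters of \<open>\<int>/N\<close>\<close>

lemma sum_power_root_of_unity:
  fixes x :: complex
  assumes "x ^ N = 1"
  shows "(\<Sum>k<N. x ^ k) = (if x = 1 then of_nat N else 0)"
  using assms by (simp add: sum_gp_strict)

lemma cnj_power_mult_power_eq_1:
  fixes z :: complex
  assumes "z ^ n = 1" "0 < n"
  shows "cnj z ^ l * z ^ l = 1"
proof -
  have "norm z = 1"
    using power_eq_1_iff[OF assms(1)] assms(2) by simp
  then have "cnj z * z = 1"
    using complex_norm_square[of z] by (simp add: mult.commute)
  then show ?thesis
    by (simp flip: power_mult_distrib)
qed

definition unit_root :: "nat \<Rightarrow> complex" where
  "unit_root N = cis (2 * pi / N)"

lemma unit_root_power: "unit_root N ^ t = cis (2 * pi * t / N)"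
  by (simp add: unit_root_def Complex.DeMoivre mult.commute)

lemma unit_root_power_eq_1_iff: "0 < N \<Longrightarrow> unit_root N ^ t = 1 \<longleftrightarrow> N dvd t"
  using complex_root_unity_eq_1[of N t]
  by (simp add: unit_root_power cis_conv_exp field_simps)

lemma unit_root_power_self [simp]: "unit_root N ^ N = 1"
  by (cases "N = 0") (simp_all add: unit_root_power)

lemma unit_root_power_mult_cnj [simp]: "unit_root N ^ t * cnj (unit_root N) ^ t = 1"
  by (simp add: unit_root_def cis_cnj cis_mult flip: power_mult_distrib)

lemma cnj_unit_root_power_self [simp]: "cnj (unit_root N) ^ N = 1"
  by (simp flip: complex_cnj_power)

lemma unit_root_power_eq_iff:
  "0 < N \<Longrightarrow> unit_root N ^ i = unit_root N ^ j \<longleftrightarrow> i mod N = j mod N"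
  using complex_root_unity_eq[of N i j]
  by (simp add: unit_root_power cis_conv_exp field_simps)

definition dft :: "nat \<Rightarrow> (nat \<Rightarrow> complex) \<Rightarrow> nat \<Rightarrow> complex" where
  "dft N f k = (\<Sum>r<N. f r * cnj (unit_root N) ^ (k * r))"

lemma sum_unit_root_orthogonality:
  assumes "r < N"
  shows "(\<Sum>k<N. cnj (unit_root N) ^ (k * r) * unit_root N ^ (k * j)) =
    (if r = j mod N then of_nat N else 0)"
proof -
  define x where "x = cnj (unit_root N) ^ r * unit_root N ^ j"
  have "cnj (unit_root N) ^ (k * r) * unit_root N ^ (k * j) = x ^ k" for k
    by (simp add: x_def power_mult_distrib mult.commute[of k] power_mult)
  moreover have "x ^ N = 1"
    by (simp add: x_def power_mult_distrib mult.commute[of _ N] flip: power_mult) (simp add: power_mult)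
  moreover have "x = 1 \<longleftrightarrow> unit_root N ^ j = unit_root N ^ r"
    by (metis x_def mult.assoc mult.commute mult_1_left unit_root_power_mult_cnj)
  ultimately show ?thesis
    using assms by (simp add: sum_power_root_of_unity unit_root_power_eq_iff eq_commute[of r])
qed

lemma dft_inversion:
  assumes "0 < N"
  shows "f (j mod N) = (\<Sum>k<N. dft N f k * unit_root N ^ (k * j)) / of_nat N"
proof -
  have "(\<Sum>k<N. dft N f k * unit_root N ^ (k * j)) =
      (\<Sum>k<N. \<Sum>r<N. f r * (cnj (unit_root N) ^ (k * r) * unit_root N ^ (k * j)))"
    by (simp add: dft_def sum_distrib_right mult.assoc)
  also have "\<dots> = (\<Sum>r<N. f r * (\<Sum>k<N. cnj (unit_root N) ^ (k * r) * unit_root N ^ (k * j)))"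
    by (subst sum.swap) (simp add: sum_distrib_left)
  also have "\<dots> = (\<Sum>r<N. if r = j mod N then f r * of_nat N else 0)"
    by (rule sum.cong[OF refl]) (simp add: sum_unit_root_orthogonality)
  also have "\<dots> = f (j mod N) * of_nat N"
    using assms by (simp add: sum.delta)
  finally show ?thesis
    using assms by simp
qed

lemma norm_one_minus_cis_double: "norm (1 - cis (2 * t)) = 2 * \<bar>sin t\<bar>"
proof -
  have "(norm (1 - cis (2 * t)))\<^sup>2 = (1 - cos (2 * t))\<^sup>2 + (sin (2 * t))\<^sup>2"
    by (simp add: cmod_power2 cis.ctr)
  also have "\<dots> = (2 * sin t)\<^sup>2 * ((sin t)\<^sup>2 + (cos t)\<^sup>2)"
    unfolding cos_double_sin sin_double by algebra
  also have "\<dots> = (2 * \<bar>sin t\<bar>)\<^sup>2"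
    by simp
  finally show ?thesis
    by (rule power2_eq_imp_eq) auto
qed

lemma norm_one_plus_cis_double: "norm (1 + cis (2 * t)) = 2 * \<bar>cos t\<bar>"
proof -
  have "(norm (1 + cis (2 * t)))\<^sup>2 = (1 + cos (2 * t))\<^sup>2 + (sin (2 * t))\<^sup>2"
    by (simp add: cmod_power2 cis.ctr)
  also have "\<dots> = (2 * cos t)\<^sup>2 * ((sin t)\<^sup>2 + (cos t)\<^sup>2)"
    unfolding cos_double_cos sin_double by algebra
  also have "\<dots> = (2 * \<bar>cos t\<bar>)\<^sup>2"
    by simp
  finally show ?thesis
    by (rule power2_eq_imp_eq) auto
qed

definition even_weight :: "nat \<Rightarrow> complex" where
  "even_weight r = (if r = 0 then 1/2 else if even r then 1 else 0)"

lemma sum_even_weight_mult_power: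
  "(\<Sum>r<2*K+1. even_weight r * w ^ r) = (\<Sum>s<K+1. (w\<^sup>2) ^ s) - 1/2"
proof (induction K)
  case 0
  then show ?case by (simp add: even_weight_def)
next
  case (Suc K)
  have "2 * Suc K + 1 = Suc (Suc (2*K + 1))"
    by simp
  then show ?case
    using Suc by (simp add: even_weight_def flip: power_mult)
qed

lemma dft_even_weight_0:
  assumes "odd N"
  shows "dft N even_weight 0 = of_nat N / 2"
proof -
  obtain K where N: "N = 2*K + 1"
    using assms oddE by blast
  have "dft N even_weight 0 = (\<Sum>r<2*K+1. even_weight r * 1 ^ r)"
    by (simp add: dft_def N)
  also have "\<dots> = of_nat (K+1) - 1/2"
    by (simp only: sum_even_weight_mult_power) simp
  finally show ?thesis
    by (simp add: N field_simps)
qed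

lemma sum_even_powers_root_of_unity:
  fixes w :: complex
  assumes "w ^ (2*K + 1) = 1" "w \<noteq> 1"
  shows "(\<Sum>s<K+1. (w\<^sup>2) ^ s) = 1 / (1 + w)"
proof -
  have "w \<noteq> -1"
    using assms(1) by auto
  with assms(2) have "w\<^sup>2 \<noteq> 1"
    by (simp add: power2_eq_1_iff)
  have "(w\<^sup>2) ^ (K+1) = w * w ^ (2*K + 1)"
    unfolding power_mult[symmetric] by simp
  then have "(w\<^sup>2) ^ (K+1) = w"
    using assms(1) by simp
  have "(\<Sum>s<K+1. (w\<^sup>2) ^ s) = (1 - (w\<^sup>2) ^ (K+1)) / (1 - w\<^sup>2)"
    by (simp only: sum_gp_strict \<open>w\<^sup>2 \<noteq> 1\<close> if_False)
  also have "\<dots> = (1 - w) / ((1 - w) * (1 + w))"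
    by (simp only: \<open>(w\<^sup>2) ^ (K+1) = w\<close>) (simp add: power2_eq_square algebra_simps)
  also have "\<dots> = 1 / (1 + w)"
    using assms(2) by simp
  finally show ?thesis .
qed

lemma dft_even_weight:
  assumes "odd N" "0 < k" "k < N"
  shows "dft N even_weight k = (1 - cnj (unit_root N) ^ k) / (2 * (1 + cnj (unit_root N) ^ k))"
proof -
  define w where "w = cnj (unit_root N) ^ k"
  obtain K where N: "N = 2*K + 1"
    using assms oddE by blast
  have wN: "w ^ N = 1"
    by (simp add: w_def mult.commute[of k] flip: power_mult) (simp add: power_mult)
  have "w \<noteq> 1"
  proof
    assume "w = 1"
    then have "unit_root N ^ k = 1"
      by (metis w_def complex_cnj_cnj complex_cnj_one complex_cnj_power)
    then show False
      using assms unit_root_power_eq_1_iff[of N k] by (auto dest: dvd_imp_le)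
  qed
  have "1 + w \<noteq> 0"
    using wN assms by (auto simp: add_eq_0_iff)
  have "dft N even_weight k = (\<Sum>r<2*K+1. even_weight r * w ^ r)"
    by (simp add: dft_def w_def N power_mult)
  also have "\<dots> = 1 / (1 + w) - 1/2"
    using sum_even_powers_root_of_unity[of w K] wN \<open>w \<noteq> 1\<close>
    unfolding sum_even_weight_mult_power N by presburger
  finally show ?thesis
    using \<open>1 + w \<noteq> 0\<close> unfolding w_def[symmetric] by (simp add: field_simps)
qed

lemma norm_dft_even_weight_le:
  assumes "odd N" "0 < k" "k < N"
  shows "norm (dft N even_weight k) \<le> N / (pi * \<bar>real N - 2 * real k\<bar>)"
proof -
  define t where "t = pi * k / N"
  have "real N \<noteq> 2 * real k"
    using assms by (metis even_mult_iff even_numeral of_nat_eq_iff of_nat_mult of_nat_numeral)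
  then have t: "0 < t" "t < pi" "t \<noteq> pi / 2"
    using assms by (auto simp: t_def field_simps)
  have half: "pi / 2 - t = pi * (real N - 2 * real k) / (2 * N)"
    using assms by (simp add: t_def field_simps)
  have "cnj (unit_root N) ^ k = cis (2 * (- t))"
    by (simp add: t_def unit_root_power cis_cnj mult.assoc flip: complex_cnj_power)
  then have "norm (1 - cnj (unit_root N) ^ k) = 2 * \<bar>sin t\<bar>"
    and "norm (1 + cnj (unit_root N) ^ k) = 2 * \<bar>cos t\<bar>"
    using norm_one_minus_cis_double[of "-t"] norm_one_plus_cis_double[of "-t"] by simp_all
  then have "norm (dft N even_weight k) = \<bar>sin t\<bar> / (2 * \<bar>cos t\<bar>)"
    unfolding dft_even_weight[OF assms] norm_divide norm_mult by simp
  also have "\<dots> \<le> 1 / (2 * \<bar>pi / 2 - t\<bar>)"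
    using abs_sin_div_abs_cos_le[OF t] by (simp add: field_simps)
  also have "\<dots> = N / (pi * \<bar>real N - 2 * real k\<bar>)"
    using half by (simp add: abs_mult abs_divide)
  finally show ?thesis .
qed

lemma sum_norm_dft_even_weight_le:
  assumes "N = 2*L + 1"
  shows "(\<Sum>k\<in>{1..<N}. norm (dft N even_weight k)) \<le> 2 * N / pi * odd_harmonic L"
proof -
  have "(\<Sum>k\<in>{1..<N}. norm (dft N even_weight k)) \<le> (\<Sum>k\<in>{1..<N}. N / (pi * \<bar>real N - 2 * real k\<bar>))"
    using assms by (intro sum_mono norm_dft_even_weight_le) auto
  also have "\<dots> = N / pi * (\<Sum>k\<in>{1..<N}. 1 / \<bar>real N - 2 * real k\<bar>)"
    by (simp add: sum_distrib_left)
  also have "(\<Sum>k\<in>{1..<N}. 1 / \<bar>real N - 2 * real k\<bar>) = 2 * odd_harmonic L"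
    using sum_inverse_abs_odd_minus_even[of L] assms by (simp add: atLeastLessThanSuc_atLeastAtMost)
  finally show ?thesis
    by (simp add: mult_ac)
qed

section \<open>Additive characters and the Walsh transform\<close>

text \<open>For \<open>a x = tr(\<lambda> x) + c\<close>, \<open>affine_sign a\<close> is the additive character
  \<open>x \<mapsto> (-1)^tr(\<lambda> x)\<close> and \<open>walsh F a\<close> is \<open>W\<^sub>F(\<lambda>)\<close>.\<close>

definition affine_sign :: "('a::ab_group_add \<Rightarrow> bool) \<Rightarrow> 'a \<Rightarrow> complex" where
  "affine_sign a x = (if a x = a 0 then 1 else -1)"

lemma affine_sign_0 [simp]: "affine_sign a 0 = 1"
  by (simp add: affine_sign_def)

lemma cnj_affine_sign [simp]: "cnj (affine_sign a x) = affine_sign a x"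
  by (simp add: affine_sign_def)

lemma norm_affine_sign [simp]: "norm (affine_sign a x) = 1"
  by (simp add: affine_sign_def)

lemma affine_sign_add:
  "affine_bool a \<Longrightarrow> affine_sign a (x + y) = affine_sign a x * affine_sign a y"
  unfolding affine_bool_def affine_sign_def by (cases "a x"; cases "a y"; cases "a 0") simp_all

lemma affine_sign_minus: "affine_bool a \<Longrightarrow> affine_sign a (- x) = affine_sign a x"
  using affine_sign_add[of a x "- x"] by (auto simp: affine_sign_def split: if_splits)

lemma sum_affine_sign_eq_0:
  fixes a :: "'a::{ab_group_add,finite} \<Rightarrow> bool"
  assumes "affine_bool a" "a x0 \<noteq> a 0"
  shows "(\<Sum>x\<in>UNIV. affine_sign a x) = 0"
proof -
  have "(\<Sum>x\<in>UNIV. affine_sign a x) = (\<Sum>x\<in>UNIV. affine_sign a (x + x0))"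
    by (rule sum.reindex_bij_witness[where i="\<lambda>y. y + x0" and j="\<lambda>y. y - x0"]) auto
  also have "\<dots> = affine_sign a x0 * (\<Sum>x\<in>UNIV. affine_sign a x)"
    using assms(1) by (simp add: affine_sign_add sum_distrib_left mult.commute)
  finally show ?thesis
    using assms(2) by (simp add: affine_sign_def)
qed

definition walsh :: "('a::{ab_group_add,finite} \<Rightarrow> bool) \<Rightarrow> ('a \<Rightarrow> bool) \<Rightarrow> complex" where
  "walsh F a = (\<Sum>x\<in>UNIV. (if F x then -1 else 1) * affine_sign a x)"

lemma card_disagreement_ge:
  fixes F a :: "'a::{ab_group_add,finite} \<Rightarrow> bool"
  shows "real (card {x. F x \<noteq> a x}) \<ge> (CARD('a) - norm (walsh F a)) / 2"
proof -
  define D where "D = {x. F x \<noteq> a x}"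
  define s :: complex where "s = (if a 0 then -1 else 1)"
  have "(if x \<in> D then -1 else 1) = s * ((if F x then -1 else 1) * affine_sign a x)" for x
    by (auto simp: D_def s_def affine_sign_def)
  then have "(\<Sum>x\<in>UNIV. if x \<in> D then -1 else 1 :: complex) = s * walsh F a"
    by (simp add: walsh_def sum_distrib_left)
  moreover have "card D + card (- D) = CARD('a)"
    using card_Un_disjoint[of D "- D"] by simp
  then have "(\<Sum>x\<in>UNIV. if x \<in> D then -1 else 1 :: complex) = of_nat CARD('a) - 2 * of_nat (card D)"
    by (simp add: sum.If_cases flip: of_nat_add)
  ultimately have "s * walsh F a = of_nat CARD('a) - 2 * of_nat (card D)"
    by simp
  from arg_cong[where f=Re, OF this] have "real (card D) = (CARD('a) - Re (s * walsh F a)) / 2"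
    by simp
  moreover have "Re (s * walsh F a) \<le> norm (s * walsh F a)"
    by (rule complex_Re_le_cmod)
  moreover have "norm (s * walsh F a) = norm (walsh F a)"
    by (simp add: s_def norm_mult)
  ultimately show ?thesis
    by (simp add: D_def)
qed

lemma nonlinearity_attained:
  fixes F :: "'a::{ab_group_add,finite} \<Rightarrow> bool"
  obtains a where "affine_bool a" "nonlinearity F = card {x. F x \<noteq> a x}"
proof -
  let ?A = "{card {x. F x \<noteq> a x} | a. affine_bool a}"
  have "?A \<subseteq> {..CARD('a)}"
    by (auto intro: card_mono)
  then have "finite ?A"
    by (rule finite_subset) simp
  moreover have "affine_bool (\<lambda>_::'a. False)"
    by (simp add: affine_bool_def)
  then have "?A \<noteq> {}"
    by blast
  ultimately have "nonlinearity F \<in> ?A"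
    unfolding nonlinearity_def by (rule Min_in)
  then show ?thesis
    using that by blast
qed

section \<open>Finite fields and Gauss sums\<close>

lemma sum_lessThan_shift_periodic:
  fixes f :: "nat \<Rightarrow> 'a::cancel_comm_monoid_add"
  assumes "\<And>j. f (j + Q) = f j"
  shows "(\<Sum>s<Q. f (l + s)) = (\<Sum>j<Q. f j)"
proof (induction l)
  case (Suc l)
  have "(\<Sum>s<Suc Q. f (l + s)) = f l + (\<Sum>s<Q. f (Suc l + s))"
    by (subst sum.lessThan_Suc_shift) simp
  moreover have "(\<Sum>s<Suc Q. f (l + s)) = (\<Sum>s<Q. f (l + s)) + f (l + Q)"
    by simp
  ultimately show ?case
    using Suc assms[of l] by (simp add: add.commute)
qed simp

lemma primitive_element_nonzero:
  fixes \<alpha> :: "'a::{field,finite}"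
  assumes "primitive_element \<alpha>" "2 < CARD('a)"
  shows "\<alpha> \<noteq> 0"
proof
  assume "\<alpha> = 0"
  have "x \<in> {0, 1}" for x :: 'a
  proof (cases "x = 0")
    case False
    then obtain k where "x = \<alpha> ^ k"
      using assms(1) unfolding primitive_element_def by blast
    then show ?thesis
      using \<open>\<alpha> = 0\<close> False by (cases k) auto
  qed simp
  then have "CARD('a) \<le> card {0, 1::'a}"
    by (intro card_mono) auto
  then show False
    using assms(2) by simp
qed

locale primitive_field =
  fixes \<alpha> :: "'a::{field,finite}"
  assumes primitive: "primitive_element \<alpha>" and nonzero: "\<alpha> \<noteq> 0"
begin

definition Q :: nat where "Q = CARD('a) - 1"

lemma card_eq_Q: "CARD('a) = Q + 1"
  using finite_UNIV_card_ge_0[where 'a='a] by (simp add: Q_def)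

lemma Q_pos: "0 < Q"
proof -
  have "card {0, 1::'a} \<le> CARD('a)"
    by (rule card_mono) auto
  then show ?thesis
    by (simp add: Q_def)
qed

lemma card_nonzero: "card (UNIV - {0::'a}) = Q"
  by (simp add: card_Diff_singleton Q_def)

lemma power_Q: "\<alpha> ^ Q = 1"
proof -
  have "(\<Prod>x\<in>UNIV - {0}. \<alpha> * x) = (\<Prod>x\<in>UNIV - {0::'a}. x)"
    by (rule prod.reindex_bij_witness[where i="\<lambda>y. y / \<alpha>" and j="\<lambda>y. \<alpha> * y"]) (use nonzero in auto)
  moreover have "(\<Prod>x\<in>UNIV - {0}. \<alpha> * x) = \<alpha> ^ Q * (\<Prod>x\<in>UNIV - {0::'a}. x)"
    by (simp add: prod.distrib card_nonzero)
  moreover have "(\<Prod>x\<in>UNIV - {0::'a}. x) \<noteq> 0"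
    by simp
  ultimately show ?thesis
    by simp
qed

lemma power_mod_Q: "\<alpha> ^ (k mod Q) = \<alpha> ^ k"
proof -
  have "\<alpha> ^ k = (\<alpha> ^ Q) ^ (k div Q) * \<alpha> ^ (k mod Q)"
    unfolding power_mult[symmetric] power_add[symmetric] by simp
  then show ?thesis
    by (simp add: power_Q)
qed

lemma bij_betw_power: "bij_betw (\<lambda>k. \<alpha> ^ k) {..<Q} (UNIV - {0})"
proof -
  have "(\<lambda>k. \<alpha> ^ k) ` {..<Q} = UNIV - {0}"
  proof
    show "(\<lambda>k. \<alpha> ^ k) ` {..<Q} \<subseteq> UNIV - {0}"
      using nonzero by auto
    show "UNIV - {0} \<subseteq> (\<lambda>k. \<alpha> ^ k) ` {..<Q}"
    proof
      fix x :: 'a assume "x \<in> UNIV - {0}"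
      then obtain k where "x = \<alpha> ^ k"
        using primitive unfolding primitive_element_def by blast
      then show "x \<in> (\<lambda>k. \<alpha> ^ k) ` {..<Q}"
        using Q_pos power_mod_Q[of k] by (intro image_eqI[of _ _ "k mod Q"]) auto
    qed
  qed
  moreover have "inj_on (\<lambda>k. \<alpha> ^ k) {..<Q}"
    by (rule eq_card_imp_inj_on) (simp_all add: calculation card_nonzero)
  ultimately show ?thesis
    by (simp add: bij_betw_def)
qed

lemma power_eq_power_iff: "\<alpha> ^ i = \<alpha> ^ j \<longleftrightarrow> i mod Q = j mod Q"
proof
  assume "\<alpha> ^ i = \<alpha> ^ j"
  then have "\<alpha> ^ (i mod Q) = \<alpha> ^ (j mod Q)"
    by (simp add: power_mod_Q)
  then show "i mod Q = j mod Q"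
    using bij_betw_power Q_pos unfolding bij_betw_def inj_on_def by simp
qed (metis power_mod_Q)

lemma sum_nonzero_eq_sum_power: "(\<Sum>x\<in>UNIV - {0}. f x) = (\<Sum>j<Q. f (\<alpha> ^ j))"
  using sum.reindex_bij_betw[OF bij_betw_power, of f] by simp

lemma sum_affine_sign_power_mult:
  assumes "affine_bool a" "a x0 \<noteq> a 0" "c \<noteq> 0"
  shows "(\<Sum>l<Q. affine_sign a (\<alpha> ^ l * c)) = -1"
proof -
  have "(\<Sum>l<Q. affine_sign a (\<alpha> ^ l * c)) = (\<Sum>x\<in>UNIV - {0}. affine_sign a (x * c))"
    by (rule sum_nonzero_eq_sum_power[symmetric])
  also have "\<dots> = (\<Sum>x\<in>UNIV. affine_sign a (x * c)) - 1"
    by (simp add: sum_diff1)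
  also have "(\<Sum>x\<in>UNIV. affine_sign a (x * c)) = (\<Sum>x\<in>UNIV. affine_sign a x)"
    by (rule sum.reindex_bij_witness[where i="\<lambda>y. y / c" and j="\<lambda>y. y * c"]) (use assms(3) in auto)
  finally show ?thesis
    using sum_affine_sign_eq_0[OF assms(1,2)] by simp
qed

text \<open>For \<open>z^Q = 1\<close>, \<open>\<alpha>^j \<mapsto> z^j\<close> is a multiplicative character and \<open>gauss_sum z a\<close>
  is its Gauss sum against the additive character \<open>affine_sign a\<close>.\<close>

definition gauss_sum :: "complex \<Rightarrow> ('a \<Rightarrow> bool) \<Rightarrow> complex" where
  "gauss_sum z a = (\<Sum>j<Q. z ^ j * affine_sign a (\<alpha> ^ j))"

lemma gauss_sum_mult_cnj_eq:
  assumes a: "affine_bool a" and z: "z ^ Q = 1"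
  shows "gauss_sum z a * cnj (gauss_sum z a) =
    (\<Sum>s<Q. z ^ s * (\<Sum>l<Q. affine_sign a (\<alpha> ^ l * (\<alpha> ^ s - 1))))"
proof -
  have shift: "gauss_sum z a = (\<Sum>s<Q. z ^ (l + s) * affine_sign a (\<alpha> ^ (l + s)))" for l
    unfolding gauss_sum_def
    by (rule sum_lessThan_shift_periodic[symmetric]) (simp add: power_add z power_Q)
  have summand: "cnj (z ^ l * affine_sign a (\<alpha> ^ l)) * (z ^ (l + s) * affine_sign a (\<alpha> ^ (l + s)))
      = z ^ s * affine_sign a (\<alpha> ^ l * (\<alpha> ^ s - 1))" for l s
  proof -
    have "\<alpha> ^ l * (\<alpha> ^ s - 1) = - (\<alpha> ^ l) + \<alpha> ^ l * \<alpha> ^ s"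
      by (simp add: algebra_simps)
    then have "affine_sign a (\<alpha> ^ l * (\<alpha> ^ s - 1)) = affine_sign a (\<alpha> ^ l) * affine_sign a (\<alpha> ^ (l + s))"
      by (simp only: affine_sign_add[OF a] affine_sign_minus[OF a] power_add)
    then show ?thesis
      using cnj_power_mult_power_eq_1[OF z Q_pos, of l] by (simp add: power_add mult_ac)
  qed
  have "cnj (gauss_sum z a) = (\<Sum>l<Q. cnj (z ^ l * affine_sign a (\<alpha> ^ l)))"
    by (simp add: gauss_sum_def cnj_sum)
  then have "gauss_sum z a * cnj (gauss_sum z a) =
      (\<Sum>l<Q. cnj (z ^ l * affine_sign a (\<alpha> ^ l)) * gauss_sum z a)"
    by (simp only: mult.commute[of "gauss_sum z a"] sum_distrib_right)
  also have "\<dots> = (\<Sum>l<Q. \<Sum>s<Q. z ^ s * affine_sign a (\<alpha> ^ l * (\<alpha> ^ s - 1)))"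
  proof (rule sum.cong[OF refl])
    fix l
    show "cnj (z ^ l * affine_sign a (\<alpha> ^ l)) * gauss_sum z a =
        (\<Sum>s<Q. z ^ s * affine_sign a (\<alpha> ^ l * (\<alpha> ^ s - 1)))"
      by (simp only: shift[of l] sum_distrib_left summand)
  qed
  also have "\<dots> = (\<Sum>s<Q. z ^ s * (\<Sum>l<Q. affine_sign a (\<alpha> ^ l * (\<alpha> ^ s - 1))))"
    by (subst sum.swap) (simp add: sum_distrib_left)
  finally show ?thesis .
qed

lemma gauss_sum_mult_cnj:
  assumes a: "affine_bool a" "a x0 \<noteq> a 0" and z: "z ^ Q = 1" "z \<noteq> 1"
  shows "gauss_sum z a * cnj (gauss_sum z a) = of_nat CARD('a)"
proof -
  have "gauss_sum z a * cnj (gauss_sum z a) = (\<Sum>s<Q. z ^ s * (if s = 0 then of_nat Q else -1))"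
    unfolding gauss_sum_mult_cnj_eq[OF a(1) z(1)]
  proof (rule sum.cong[OF refl])
    fix s assume "s \<in> {..<Q}"
    then have "\<alpha> ^ s - 1 = 0 \<longleftrightarrow> s = 0"
      using power_eq_power_iff[of s 0] by auto
    then show "z ^ s * (\<Sum>l<Q. affine_sign a (\<alpha> ^ l * (\<alpha> ^ s - 1))) = z ^ s * (if s = 0 then of_nat Q else -1)"
      using sum_affine_sign_power_mult[OF a] by auto
  qed
  also have "\<dots> = (\<Sum>s<Q. (if s = 0 then of_nat Q + 1 else 0) - z ^ s)"
    by (rule sum.cong) auto
  also have "\<dots> = of_nat Q + 1 - (\<Sum>s<Q. z ^ s)"
    using Q_pos by (simp add: sum_subtractf)
  also have "(\<Sum>s<Q. z ^ s) = 0"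
    using z by (simp add: sum_power_root_of_unity)
  finally show ?thesis
    by (simp add: card_eq_Q)
qed

lemma norm_gauss_sum_le:
  assumes "affine_bool a" "z ^ Q = 1" "z \<noteq> 1"
  shows "norm (gauss_sum z a) \<le> sqrt CARD('a)"
proof (cases "\<forall>x. a x = a 0")
  case True
  then have "gauss_sum z a = (\<Sum>j<Q. z ^ j)"
    by (simp add: gauss_sum_def affine_sign_def)
  then show ?thesis
    using assms by (simp add: sum_power_root_of_unity)
next
  case False
  then obtain x0 where "a x0 \<noteq> a 0"
    by blast
  from gauss_sum_mult_cnj[OF assms(1) this assms(2,3)]
  have "(norm (gauss_sum z a))\<^sup>2 = CARD('a)"
    by (metis complex_norm_square of_real_eq_iff of_real_of_nat_eq)
  then show ?thesis
    by (simp add: real_sqrt_unique)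
qed

end

section \<open>The function \<open>F\<close>\<close>

locale even_degree_field =
  fixes \<alpha> :: "'a::{field,finite}" and m :: nat
  assumes m_pos: "1 \<le> m" and card_eq: "CARD('a) = 2 ^ (2 * m)"
    and primitive: "primitive_element \<alpha>"
begin

definition q :: nat where "q = 2 ^ m"
definition N :: nat where "N = q - 1"
definition M :: nat where "M = q + 1"
definition L :: nat where "L = 2 ^ (m - 1) - 1"

lemma two_le_q: "2 \<le> q"
  using m_pos power_increasing[of 1 m "2::nat"] by (simp add: q_def)

lemma card_eq_q: "CARD('a) = q * q"
  by (simp add: card_eq q_def power_mult power2_eq_square mult.commute)

lemma N_eq: "N = 2 * L + 1"
proof -
  have "q = 2 * 2 ^ (m - 1)"
    using m_pos by (simp add: q_def flip: power_Suc)
  moreover have "1 \<le> (2::nat) ^ (m - 1)"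
    by simp
  ultimately show ?thesis
    unfolding N_def L_def by linarith
qed

lemma M_eq: "M = N + 2"
  using two_le_q by (simp add: M_def N_def)

sublocale primitive_field \<alpha>
proof
  have "2 < CARD('a)"
    using two_le_q mult_le_mono[of 2 q 2 q] by (simp add: card_eq_q)
  then show "\<alpha> \<noteq> 0"
    using primitive by (rule primitive_element_nonzero[rotated])
qed (fact primitive)

lemma Q_eq: "Q = N * M"
  using two_le_q by (simp add: Q_def card_eq_q N_def M_def algebra_simps)

definition U :: "'a set" where
  "U = {(\<alpha> ^ (2^m - 1)) ^ k | k. True}"
definition Gamma_U :: "'a set" where
  "Gamma_U = {y * z | y z. y \<in> {(\<alpha> ^ (2^m + 1)) ^ i | i. 1 \<le> i \<and> i \<le> 2^(m-1) - 1} \<and> z \<in> U}"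
definition xi_powers :: "'a set" where
  "xi_powers = {(\<alpha> ^ (2^m - 1)) ^ i | i. i \<le> 2^(m-1)}"

lemma xi_power: "(\<alpha> ^ (2^m - 1)) ^ k = \<alpha> ^ (N * k)"
  by (simp only: N_def q_def power_mult)

lemma beta_power: "(\<alpha> ^ (2^m + 1)) ^ i = \<alpha> ^ (M * i)"
  by (simp only: M_def q_def power_mult)

lemma U_eq: "U = {\<alpha> ^ (N * k) | k. True}"
  unfolding U_def xi_power ..

lemma Gamma_U_eq: "Gamma_U = {\<alpha> ^ (M * i) * \<alpha> ^ (N * k) | i k. 1 \<le> i \<and> i \<le> L}"
  unfolding Gamma_U_def U_eq beta_power L_def[symmetric] by blast

lemma mod_N_eq_if_mod_Q_eq: "i mod Q = j mod Q \<Longrightarrow> i mod N = j mod N"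
  by (metis Q_eq dvd_triv_left mod_mod_cancel)

lemma power_mem_U_iff: "\<alpha> ^ j \<in> U \<longleftrightarrow> N dvd j"
proof
  assume "\<alpha> ^ j \<in> U"
  then obtain k where "\<alpha> ^ j = \<alpha> ^ (N * k)"
    unfolding U_eq by blast
  then have "j mod N = (N * k) mod N"
    using power_eq_power_iff mod_N_eq_if_mod_Q_eq by blast
  then show "N dvd j"
    by (simp add: dvd_eq_mod_eq_0)
qed (auto simp: U_eq)

lemma power_mem_Gamma_U_iff: "\<alpha> ^ j \<in> Gamma_U \<longleftrightarrow> even (j mod N) \<and> j mod N \<noteq> 0"
proof
  assume "\<alpha> ^ j \<in> Gamma_U"
  then obtain i k where ik: "1 \<le> i" "i \<le> L" "\<alpha> ^ j = \<alpha> ^ (M * i + N * k)"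
    unfolding Gamma_U_eq by (auto simp: power_add)
  then have "j mod N = (M * i + N * k) mod N"
    using power_eq_power_iff mod_N_eq_if_mod_Q_eq by blast
  also have "M * i + N * k = 2 * i + N * (i + k)"
    by (simp add: M_eq algebra_simps)
  also have "2 * i < N"
    using ik N_eq by linarith
  then have "(2 * i + N * (i + k)) mod N = 2 * i"
    by simp
  finally show "even (j mod N) \<and> j mod N \<noteq> 0"
    using ik by simp
next
  assume j: "even (j mod N) \<and> j mod N \<noteq> 0"
  define i where "i = j mod N div 2"
  define k where "k = j div N + (N + 1) * i"
  have "2 * i = j mod N"
    using j by (simp add: i_def)
  moreover have "j mod N < N"
    using N_eq by simp
  ultimately have "1 \<le> i" "i \<le> L"
    using j N_eq by linarith+
  have "M * i + N * k = N * (j div N) + 2 * i + N * M * i"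
    by (simp add: k_def M_eq algebra_simps)
  also have "\<dots> = j + Q * i"
    using \<open>2 * i = j mod N\<close> by (simp add: Q_eq)
  finally have "\<alpha> ^ (M * i) * \<alpha> ^ (N * k) = \<alpha> ^ j * (\<alpha> ^ Q) ^ i"
    by (simp flip: power_add power_mult)
  then have "\<alpha> ^ j = \<alpha> ^ (M * i) * \<alpha> ^ (N * k)"
    by (simp add: power_Q)
  with \<open>1 \<le> i\<close> \<open>i \<le> L\<close> show "\<alpha> ^ j \<in> Gamma_U"
    unfolding Gamma_U_eq by blast
qed

lemma zero_notin_U: "0 \<notin> U"
  using nonzero by (auto simp: U_eq)

lemma zero_notin_Gamma_U: "0 \<notin> Gamma_U"
  using nonzero by (auto simp: Gamma_U_eq)

lemma xi_powers_subset_U: "xi_powers \<subseteq> U"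
  unfolding xi_powers_def U_def by blast

lemma Gamma_U_disjoint_U: "Gamma_U \<inter> U = {}"
proof -
  have "x \<notin> U" if "x \<in> Gamma_U" for x
  proof -
    have "x \<noteq> 0"
      using that zero_notin_Gamma_U by blast
    then obtain j where "x = \<alpha> ^ j"
      using primitive unfolding primitive_element_def by blast
    then show ?thesis
      using that by (auto simp: power_mem_Gamma_U_iff power_mem_U_iff dvd_eq_mod_eq_0)
  qed
  then show ?thesis
    by blast
qed

lemma card_U_le: "card U \<le> M"
proof -
  have "U \<subseteq> (\<lambda>k. \<alpha> ^ (N * k)) ` {..<M}"
  proof
    fix x assume "x \<in> U"
    then obtain k where x: "x = \<alpha> ^ (N * k)"
      unfolding U_eq by blast
    have "N * (k mod M) = (N * k) mod Q"
      by (simp only: Q_eq mult_mod_right)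
    then have "\<alpha> ^ (N * (k mod M)) = \<alpha> ^ (N * k)"
      by (simp add: power_mod_Q)
    moreover have "k mod M < M"
      by (simp add: M_eq)
    ultimately show "x \<in> (\<lambda>k. \<alpha> ^ (N * k)) ` {..<M}"
      unfolding x by (intro image_eqI[where x="k mod M"]) auto
  qed
  from surj_card_le[OF finite_lessThan this] show ?thesis
    by simp
qed

definition periodic_part :: "'a \<Rightarrow> complex" where
  "periodic_part x = (if x \<in> Gamma_U then 1 else 0) + (if x \<in> U then 1/2 else 0)"

definition correction :: "'a \<Rightarrow> complex" where
  "correction x = (if x \<in> xi_powers then 1 else 0) - (if x \<in> U then 1/2 else 0)"

lemma periodic_part_power: "periodic_part (\<alpha> ^ j) = even_weight (j mod N)"
  by (auto simp: periodic_part_def even_weight_def power_mem_Gamma_U_iff power_mem_U_iff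
      dvd_eq_mod_eq_0)

lemma periodic_part_0 [simp]: "periodic_part 0 = 0"
  using zero_notin_U zero_notin_Gamma_U by (simp add: periodic_part_def)

lemma unit_root_power_power_Q: "(unit_root N ^ k) ^ Q = 1"
  by (metis Q_eq mult.commute power_mult power_one unit_root_power_self)

lemma sum_periodic_part_affine_sign:
  "(\<Sum>x\<in>UNIV. periodic_part x * affine_sign a x) =
    ((\<Sum>x\<in>UNIV. affine_sign a x) - 1) / 2 +
    (\<Sum>k\<in>{1..<N}. dft N even_weight k * gauss_sum (unit_root N ^ k) a) / N"
proof -
  have "odd N" and "N \<noteq> 0"
    by (simp_all add: N_eq)
  have "(\<Sum>x\<in>UNIV. periodic_part x * affine_sign a x) = (\<Sum>x\<in>UNIV - {0}. periodic_part x * affine_sign a x)"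
    by (rule sum.mono_neutral_right) auto
  also have "\<dots> = (\<Sum>j<Q. even_weight (j mod N) * affine_sign a (\<alpha> ^ j))"
    by (simp add: sum_nonzero_eq_sum_power periodic_part_power)
  also have "\<dots> = (\<Sum>j<Q. (\<Sum>k<N. dft N even_weight k * unit_root N ^ (k * j)) / N * affine_sign a (\<alpha> ^ j))"
    using \<open>N \<noteq> 0\<close> by (simp flip: dft_inversion)
  also have "\<dots> = (\<Sum>k<N. dft N even_weight k * gauss_sum (unit_root N ^ k) a) / N"
  proof -
    have "(\<Sum>k<N. dft N even_weight k * gauss_sum (unit_root N ^ k) a) =
        (\<Sum>k<N. \<Sum>j<Q. dft N even_weight k * unit_root N ^ (k * j) * affine_sign a (\<alpha> ^ j))"
      by (simp add: gauss_sum_def sum_distrib_left power_mult mult.assoc)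
    also have "\<dots> = (\<Sum>j<Q. \<Sum>k<N. dft N even_weight k * unit_root N ^ (k * j) * affine_sign a (\<alpha> ^ j))"
      by (rule sum.swap)
    finally show ?thesis
      by (simp add: sum_divide_distrib sum_distrib_right)
  qed
  also have "(\<Sum>k<N. dft N even_weight k * gauss_sum (unit_root N ^ k) a) =
      dft N even_weight 0 * gauss_sum 1 a + (\<Sum>k\<in>{1..<N}. dft N even_weight k * gauss_sum (unit_root N ^ k) a)"
    using \<open>N \<noteq> 0\<close> by (simp add: atLeast1_lessThan_eq_remove0 sum.remove)
  also have "gauss_sum 1 a = (\<Sum>x\<in>UNIV. affine_sign a x) - 1"
    by (simp add: gauss_sum_def flip: sum_nonzero_eq_sum_power) (simp add: sum_diff1)
  finally show ?thesis
    using \<open>N \<noteq> 0\<close> by (simp add: dft_even_weight_0[OF \<open>odd N\<close>] add_divide_distrib)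
qed

lemma norm_sum_gauss_part_le:
  assumes "affine_bool a"
  shows "norm (\<Sum>k\<in>{1..<N}. dft N even_weight k * gauss_sum (unit_root N ^ k) a) / N
    \<le> 2 * real q / pi * odd_harmonic L"
proof -
  have "norm (gauss_sum (unit_root N ^ k) a) \<le> q" if "k \<in> {1..<N}" for k
  proof -
    have "unit_root N ^ k \<noteq> 1"
      using that N_eq unit_root_power_eq_1_iff[of N k] by (auto dest: dvd_imp_le)
    then show ?thesis
      using norm_gauss_sum_le[OF assms unit_root_power_power_Q] by (simp add: card_eq_q)
  qed
  then have "norm (\<Sum>k\<in>{1..<N}. dft N even_weight k * gauss_sum (unit_root N ^ k) a)
      \<le> (\<Sum>k\<in>{1..<N}. norm (dft N even_weight k)) * q"
    unfolding sum_distrib_right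
    by (intro order_trans[OF norm_sum] sum_mono) (simp add: norm_mult mult_left_mono)
  also have "\<dots> \<le> 2 * real N / pi * odd_harmonic L * q"
    using sum_norm_dft_even_weight_le[OF N_eq] by (intro mult_right_mono) auto
  finally show ?thesis
    using N_eq by (simp add: divide_le_eq field_simps)
qed

lemma norm_sum_correction_le: "norm (\<Sum>x\<in>UNIV. correction x * affine_sign a x) \<le> real M / 2"
proof -
  have "norm (\<Sum>x\<in>UNIV. correction x * affine_sign a x) \<le> (\<Sum>x\<in>UNIV. if x \<in> U then 1/2 else 0)"
    using xi_powers_subset_U
    by (intro order_trans[OF norm_sum] sum_mono) (auto simp: correction_def norm_mult)
  also have "\<dots> = card U / 2"
    by (simp add: sum.If_cases)
  also have "\<dots> \<le> M / 2"
    using card_U_le by simp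
  finally show ?thesis .
qed

lemma norm_walsh_le:
  assumes F: "\<forall>x. F x \<longleftrightarrow> x \<in> Gamma_U \<union> xi_powers" and a: "affine_bool a"
  shows "norm (walsh F a) \<le> real q + 2 + 4 * real q / pi * odd_harmonic L"
proof -
  define X where "X = (\<Sum>k\<in>{1..<N}. dft N even_weight k * gauss_sum (unit_root N ^ k) a) / N"
  define R where "R = (\<Sum>x\<in>UNIV. correction x * affine_sign a x)"
  have sign: "(if F x then -1 else 1) = 1 - 2 * periodic_part x - 2 * correction x" for x
    using F Gamma_U_disjoint_U xi_powers_subset_U by (auto simp: periodic_part_def correction_def)
  have "walsh F a = (\<Sum>x\<in>UNIV. affine_sign a x - 2 * (periodic_part x * affine_sign a x)
      - 2 * (correction x * affine_sign a x))"
    unfolding walsh_def sign by (simp add: algebra_simps)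
  also have "\<dots> = (\<Sum>x\<in>UNIV. affine_sign a x) - 2 * (\<Sum>x\<in>UNIV. periodic_part x * affine_sign a x) - 2 * R"
    by (simp only: sum_subtractf sum_distrib_left R_def)
  also have "\<dots> = 1 - 2 * X - 2 * R"
    unfolding sum_periodic_part_affine_sign X_def by (simp add: field_simps)
  finally have walsh_eq: "walsh F a = 1 - 2 * X - 2 * R" .
  have "norm (1 - 2 * X) \<le> 1 + 2 * norm X"
    using norm_triangle_ineq4[of 1 "2 * X"] by (simp add: norm_mult)
  moreover have "norm (1 - 2 * X - 2 * R) \<le> norm (1 - 2 * X) + 2 * norm R"
    using norm_triangle_ineq4[of "1 - 2 * X" "2 * R"] by (simp add: norm_mult)
  ultimately have "norm (walsh F a) \<le> 1 + 2 * norm X + 2 * norm R"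
    unfolding walsh_eq by linarith
  moreover have "norm X \<le> 2 * real q / pi * odd_harmonic L"
    using norm_sum_gauss_part_le[OF a] by (simp add: X_def norm_divide)
  moreover have "norm R \<le> real M / 2"
    unfolding R_def by (rule norm_sum_correction_le)
  ultimately show ?thesis
    by (simp add: M_def)
qed

lemma two_odd_harmonic_L_lt: "2 * odd_harmonic L < ln 2 * m + 0.42 * pi"
proof (cases "L = 0")
  case True
  have "0 < ln 2 * real m + 0.42 * pi"
    by (intro add_nonneg_pos) simp_all
  then show ?thesis
    by (simp add: True odd_harmonic_def)
next
  case False
  have "L \<le> 2 ^ (m - 1)"
    by (simp add: L_def)
  then have "real L \<le> 2 ^ (m - 1)"
    by (metis of_nat_le_iff of_nat_numeral of_nat_power)
  then have "ln (real L) \<le> ln (2 ^ (m - 1))"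
    using False by (intro ln_mono) simp_all
  also have "\<dots> = (real m - 1) * ln 2"
    using m_pos by (simp add: ln_realpow of_nat_diff)
  finally have "2 * odd_harmonic L \<le> 2 + (real m - 1) * ln 2"
    using odd_harmonic_le[of L] False by simp
  moreover have "(real m - 1) * ln 2 = ln 2 * real m - ln 2"
    by (simp add: algebra_simps)
  moreover have "pi \<ge> 3.14"
    using pi_approx by simp
  ultimately show ?thesis
    using ln_2_gt by simp
qed

lemma norm_walsh_lt:
  assumes "\<forall>x. F x \<longleftrightarrow> x \<in> Gamma_U \<union> xi_powers" and "affine_bool a"
  shows "norm (walsh F a) < 2 * (ln 2 / pi * m + 0.92) * q + 2"
proof -
  have "4 * real q / pi * odd_harmonic L = 2 * real q / pi * (2 * odd_harmonic L)"
    by simp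
  also have "\<dots> < 2 * real q / pi * (ln 2 * m + 0.42 * pi)"
    using two_odd_harmonic_L_lt two_le_q by (intro mult_strict_left_mono) auto
  finally show ?thesis
    using norm_walsh_le[OF assms] by (simp add: field_simps)
qed

lemma real_power_two_pred: "(2::real) ^ (2 * m - 1) = real q * real q / 2"
proof -
  have "(2::real) ^ (2 * m) = 2 * 2 ^ (2 * m - 1)"
    using m_pos power_Suc[of "2::real" "2 * m - 1"] by simp
  moreover have "(2::real) ^ (2 * m) = real q * real q"
    by (simp add: q_def mult_2 power_add)
  ultimately show ?thesis
    by simp
qed

lemma nonlinearity_gt:
  assumes F: "\<forall>x. F x \<longleftrightarrow> x \<in> Gamma_U \<union> xi_powers"
  shows "real (nonlinearity F) > real q * real q / 2 - (ln 2 / pi * real m + 0.92) * real q - 1"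
proof -
  obtain a where a: "affine_bool a" "nonlinearity F = card {x. F x \<noteq> a x}"
    by (rule nonlinearity_attained)
  define c where "c = ln 2 / pi * real m + 0.92"
  have "real (nonlinearity F) \<ge> (real q * real q - norm (walsh F a)) / 2"
    using card_disagreement_ge[of F a] a(2) by (simp add: card_eq_q)
  moreover have "norm (walsh F a) < 2 * c * q + 2"
    unfolding c_def by (rule norm_walsh_lt[OF F a(1)])
  ultimately show ?thesis
    unfolding c_def[symmetric] by (simp add: field_simps)
qed

end

theorem theorem4:
  fixes m n :: nat and \<alpha> :: "'a::{field,finite}" and F :: "'a \<Rightarrow> bool"
  assumes "m \<ge> 1" and "n = 2 * m"
    and "CARD('a) = 2 ^ n"
    and "primitive_element \<alpha>"
    and "\<forall>x. F x \<longleftrightarrow>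
           x \<in> {y * z | y z. y \<in> {(\<alpha> ^ (2^m + 1)) ^ i | i. 1 \<le> i \<and> i \<le> 2^(m-1) - 1}
                             \<and> z \<in> {(\<alpha> ^ (2^m - 1)) ^ k | k. True}}
             \<union> {(\<alpha> ^ (2^m - 1)) ^ i | i. i \<le> 2^(m-1)}"
  shows "real (nonlinearity F) > 2 ^ (n - 1) - (ln 2 / pi * real m + 0.92) * 2 ^ m - 1"
proof -
  interpret even_degree_field \<alpha> m
    using assms(1-4) by unfold_locales simp_all
  have "\<forall>x. F x \<longleftrightarrow> x \<in> Gamma_U \<union> xi_powers"
    using assms(5) unfolding Gamma_U_def U_def xi_powers_def .
  from nonlinearity_gt[OF this] show ?thesis
    using real_power_two_pred unfolding assms(2) q_def by simp
qed

end
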